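(* Let $k$ be a field of characteristic $p>0$ with algebraic closure $\overline k$. Let $$\sigma(x)=\sum_{i=d}^{\infty}\alpha_i x^i\in\overline k((x)),$$ with $d\in\mathbb Z$ and $\alpha_i\in\overline k$ for all $i$, and let $L=k(\{\alpha_i\})\subset\overline k$ be the field generated over $k$ by the coefficients of $\sigma$. Assume $L$ is purely inseparable over $k$. Then $\sigma(x)$ is algebraic over $k((x))$ if and only if there exists $n\in\mathbb N$ such that $L^{p^n}\subset k$.
   Context: For a field $L$ of characteristic $p>0$ and $n\in\mathbb N$, $L^{p^n}=\{f^{p^n}\mid f\in L\}$. $\overline k((x))$ denotes the field of formal Laurent series in $x$ with coefficients in $\overline k$. *)

theory Defs
  imports "HOL-Computational_Algebra.Formal_Laurent_Series" "HOL-Computational_Algebra.Polynomial"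
begin

definition is_subfield :: "'a::field set \<Rightarrow> bool" where
  "is_subfield F \<longleftrightarrow> 0 \<in> F \<and> 1 \<in> F \<and>
     (\<forall>a\<in>F. \<forall>b\<in>F. a + b \<in> F \<and> a - b \<in> F \<and> a * b \<in> F) \<and>
     (\<forall>a\<in>F. inverse a \<in> F)"

definition gen_field :: "'a::field set \<Rightarrow> 'a set \<Rightarrow> 'a set" where
  "gen_field k S = \<Inter> {F. is_subfield F \<and> k \<subseteq> F \<and> S \<subseteq> F}"

definition algebraic_over :: "'a::field set \<Rightarrow> 'a \<Rightarrow> bool" where
  "algebraic_over F a \<longleftrightarrow> (\<exists>q. q \<noteq> 0 \<and> (\<forall>i. coeff q i \<in> F) \<and> poly q a = 0)"

definition alg_closed_field :: "'a::field itself \<Rightarrow> bool" where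
  "alg_closed_field _ \<longleftrightarrow> (\<forall>q::'a poly. degree q > 0 \<longrightarrow> (\<exists>x. poly q x = 0))"

definition is_alg_closure_of :: "'a::field set \<Rightarrow> bool" where
  "is_alg_closure_of k \<longleftrightarrow> is_subfield k \<and> alg_closed_field TYPE('a) \<and> (\<forall>a::'a. algebraic_over k a)"

definition purely_inseparable :: "nat \<Rightarrow> 'a::field set \<Rightarrow> 'a set \<Rightarrow> bool" where
  "purely_inseparable p k L \<longleftrightarrow> (\<forall>a\<in>L. \<exists>m::nat. a ^ (p ^ m) \<in> k)"

text \<open>k((x)) as a subfield of K((x)): Laurent series with all coefficients in k.\<close>
definition laurent_over :: "'a::field set \<Rightarrow> 'a fls set" where
  "laurent_over k = {f. \<forall>i. fls_nth f i \<in> k}"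

end

theory Submission
  imports Defs "HOL-Computational_Algebra.Primes"
begin

unbundle fps_syntax

text \<open>
  Let \<open>p = CHAR('a) > 0\<close> and \<open>K = k((x))\<close>.  If every coefficient of \<open>\<sigma>\<close> lies in
  \<open>root_field k N = {a. a ^ p ^ N \<in> k}\<close>, then by the Frobenius identity for Laurent series
  \<open>\<sigma> ^ p ^ N \<in> K\<close>, so \<open>\<sigma>\<close> is a root of \<open>X ^ p ^ N - \<sigma> ^ p ^ N\<close>.

  Conversely, if \<open>\<sigma>\<close> has degree \<open>m\<close> over \<open>K\<close>, the \<open>m + 1\<close> powers \<open>\<sigma> ^ p ^ j\<close>, \<open>j \<le> m\<close>,
  are \<open>K\<close>-linearly dependent.  Dividing out the lowest nonzero index \<open>j0\<close> gives an additive
  relation \<open>\<Sum>j\<le>m'. D j * \<tau> ^ p ^ j = 0\<close> with \<open>D 0 \<noteq> 0\<close> for \<open>\<tau> = \<sigma> ^ p ^ j0\<close>.  Comparing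
  coefficients, this relation expresses every coefficient of \<open>\<tau>\<close> beyond a fixed index \<open>B\<close>
  through \<open>k\<close> and earlier coefficients of \<open>\<tau>\<close>.  Since each of the finitely many coefficients
  up to \<open>B\<close> has some \<open>p\<close>-power in \<open>k\<close>, one exponent \<open>E\<close> works for all of them, and by
  induction for all coefficients; hence \<open>j0 + E\<close> works for \<open>\<sigma>\<close>, and then for the whole
  field \<open>L\<close> they generate, as \<open>root_field k N\<close> is a subfield containing \<open>k\<close>.
\<close>

text \<open>Subrings of a ring given as a type; they provide the coefficient domains for the
  linear algebra below (\<open>k((x))\<close> is a subring of the Laurent series over \<open>'a\<close>, not a type).\<close>

definition is_subring :: "'a::ring_1 set \<Rightarrow> bool" where
  "is_subring R \<longleftrightarrow> 0 \<in> R \<and> 1 \<in> R \<and>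
     (\<forall>a\<in>R. \<forall>b\<in>R. a + b \<in> R \<and> a - b \<in> R \<and> a * b \<in> R)"

lemma
  assumes "is_subring R"
  shows subring_0: "0 \<in> R" and subring_1: "1 \<in> R"
    and subring_add: "a \<in> R \<Longrightarrow> b \<in> R \<Longrightarrow> a + b \<in> R"
    and subring_diff: "a \<in> R \<Longrightarrow> b \<in> R \<Longrightarrow> a - b \<in> R"
    and subring_mult: "a \<in> R \<Longrightarrow> b \<in> R \<Longrightarrow> a * b \<in> R"
  using assms unfolding is_subring_def by auto

lemma subring_uminus: "is_subring R \<Longrightarrow> a \<in> R \<Longrightarrow> - a \<in> R"
  using subring_diff[of R 0 a] subring_0[of R] by simp

lemma subring_power: "is_subring R \<Longrightarrow> a \<in> R \<Longrightarrow> a ^ n \<in> R"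
  by (induction n) (auto intro: subring_1 subring_mult)

lemma subring_sum: "is_subring R \<Longrightarrow> (\<And>x. x \<in> A \<Longrightarrow> f x \<in> R) \<Longrightarrow> sum f A \<in> R"
  by (induction A rule: infinite_finite_induct) (auto intro: subring_0 subring_add)

lemma subfield_subring: "is_subfield F \<Longrightarrow> is_subring F"
  unfolding is_subfield_def is_subring_def by blast

lemma subfield_inverse: "is_subfield F \<Longrightarrow> a \<in> F \<Longrightarrow> inverse a \<in> F"
  unfolding is_subfield_def by blast

lemma gen_field_least: "is_subfield F \<Longrightarrow> k \<subseteq> F \<Longrightarrow> S \<subseteq> F \<Longrightarrow> gen_field k S \<subseteq> F"
  unfolding gen_field_def by blast

lemma gen_field_generators: "S \<subseteq> gen_field k S"
  unfolding gen_field_def by blast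

definition root_field :: "'a::field set \<Rightarrow> nat \<Rightarrow> 'a set" where
  "root_field k N = {a. a ^ (CHAR('a) ^ N) \<in> k}"

text \<open>Since \<open>a \<mapsto> a ^ p ^ N\<close> is a ring homomorphism in characteristic \<open>p\<close>, the preimage
  \<open>root_field k N\<close> of a subfield is again a subfield.\<close>

lemma root_field_subfield:
  fixes k :: "'a::field set"
  assumes k: "is_subfield k" and prime: "prime CHAR('a)"
  shows "is_subfield (root_field k N)"
proof -
  define Q where "Q = CHAR('a) ^ N"
  have "Q > 0" using prime unfolding Q_def by (simp add: prime_gt_0_nat)
  moreover have add: "(x + y) ^ Q = x ^ Q + y ^ Q" for x y :: 'a
    by (rule freshmans_dream'[OF prime]) (simp add: Q_def)
  moreover have "(x - y) ^ Q = x ^ Q - y ^ Q" for x y :: 'a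
    using add[of "x - y" y] by (simp add: algebra_simps)
  ultimately show ?thesis
    using k subfield_subring[OF k] unfolding is_subfield_def root_field_def Q_def[symmetric]
    by (auto simp: power_mult_distrib power_inverse zero_power
             intro: subring_add subring_diff subring_mult subfield_inverse)
qed

lemma root_fieldI:
  assumes k: "is_subfield k" and "a ^ (CHAR('a) ^ r) \<in> k" and "r \<le> N"
  shows "(a::'a::field) \<in> root_field k N"
proof -
  have "a ^ (CHAR('a) ^ N) = (a ^ (CHAR('a) ^ r)) ^ (CHAR('a) ^ (N - r))"
    using \<open>r \<le> N\<close> by (simp flip: power_mult power_add)
  thus ?thesis
    using assms subring_power[OF subfield_subring[OF k]] by (simp add: root_field_def)
qed

lemma subset_root_field: "is_subfield k \<Longrightarrow> k \<subseteq> root_field k N"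
  using root_fieldI[of k _ 0 N] by auto

lemma fls_times_nth_in:
  fixes f h :: "'a::ring_1 fls"
  assumes R: "is_subring R" and f: "\<And>i. f $$ i \<in> R"
    and h: "\<And>i. f $$ i \<noteq> 0 \<Longrightarrow> h $$ (n - i) \<in> R"
  shows "(f * h) $$ n \<in> R"
  unfolding fls_times_nth(2)
proof (rule subring_sum[OF R])
  fix i
  show "f $$ i * h $$ (n - i) \<in> R"
    using f[of i] h[of i] subring_mult[OF R] subring_0[OF R] by (cases "f $$ i = 0") auto
qed

lemma laurent_over_nth: "f \<in> laurent_over k \<Longrightarrow> f $$ i \<in> k"
  unfolding laurent_over_def by auto

lemma laurent_over_subring: "is_subfield k \<Longrightarrow> is_subring (laurent_over k)"
  using subfield_subring[of k]
  by (auto simp: is_subring_def laurent_over_def intro!: fls_times_nth_in)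

lemma fls_truncation_nth:
  fixes f :: "'a::comm_ring_1 fls"
  shows "(\<Sum>i\<in>{fls_subdegree f..N}. fls_const (f $$ i) * fls_X_intpow i) $$ j
           = (if j \<le> N then f $$ j else 0)"
proof -
  have "(\<Sum>i\<in>{fls_subdegree f..N}. fls_const (f $$ i) * fls_X_intpow i) $$ j
          = (\<Sum>i\<in>{fls_subdegree f..N}. if j = i then f $$ i else 0)"
    unfolding fls_nth_sum by (intro sum.cong) auto
  thus ?thesis by (simp add: sum.delta)
qed

text \<open>Coefficient \<open>n\<close> only involves the truncation \<open>A\<close> of \<open>f\<close> to indices \<open>\<le> \<bar>n\<bar>\<close>, since
  \<open>(f - A) ^ Q\<close> has subdegree above \<open>n\<close>; for the finite sum \<open>A\<close> the freshman's dream applies.\<close>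

lemma fls_frobenius_nth:
  fixes f :: "'a::field fls"
  assumes prime: "prime CHAR('a)" and Q: "Q = CHAR('a) ^ s"
  shows "(f ^ Q) $$ n = (if int Q dvd n then (f $$ (n div int Q)) ^ Q else 0)"
proof -
  have Q_pos: "Q > 0" using prime unfolding Q by (simp add: prime_gt_0_nat)
  have prime_fls: "prime CHAR('a fls)" and Q_fls: "Q = CHAR('a fls) ^ s"
    using prime Q by simp_all
  define N where "N = \<bar>n\<bar>"
  define A where "A = (\<Sum>i\<in>{fls_subdegree f..N}. fls_const (f $$ i) * fls_X_intpow i)"
  have tail: "((f - A) ^ Q) $$ n = 0"
  proof (cases "f - A = 0")
    case False
    have "N < fls_subdegree (f - A)"
      using False by (intro fls_subdegree_greaterI) (simp_all add: A_def fls_truncation_nth)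
    hence "n < int Q * fls_subdegree (f - A)"
      using Q_pos unfolding N_def by (smt (verit) mult_le_cancel_right1 of_nat_0_less_iff)
    thus ?thesis by (simp add: fls_subdegree_pow)
  qed (use Q_pos in \<open>simp add: zero_power\<close>)
  have "A ^ Q = (\<Sum>i\<in>{fls_subdegree f..N}. fls_const ((f $$ i) ^ Q) * fls_X_intpow (int Q * i))"
    unfolding A_def freshmans_dream_sum'[OF prime_fls Q_fls]
    by (simp add: power_mult_distrib fls_X_intpow_power fls_const_power)
  moreover have "f ^ Q = A ^ Q + (f - A) ^ Q"
    using freshmans_dream'[OF prime_fls Q_fls, of A "f - A"] by simp
  ultimately have "(f ^ Q) $$ n = (\<Sum>i\<in>{fls_subdegree f..N}. if n = int Q * i then (f $$ i) ^ Q else 0)"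
    using tail by (simp add: fls_nth_sum if_distrib cong: if_cong)
  also have "\<dots> = (if int Q dvd n then (f $$ (n div int Q)) ^ Q else 0)"
  proof (cases "int Q dvd n")
    case True
    define i0 where "i0 = n div int Q"
    have n: "n = int Q * i0" using True by (simp add: i0_def)
    have "\<bar>i0\<bar> \<le> N" using Q_pos unfolding N_def n by (simp add: abs_mult mult_le_cancel_right1)
    hence "(\<Sum>i\<in>{fls_subdegree f..N}. if n = int Q * i then (f $$ i) ^ Q else 0) = (f $$ i0) ^ Q"
      using Q_pos by (auto simp: n sum.delta zero_power not_le)
    thus ?thesis using True by (simp add: i0_def)
  qed (auto intro!: sum.neutral)
  finally show ?thesis .
qed

text \<open>More than \<open>n\<close> vectors of length \<open>n\<close> with entries in a subring \<open>R\<close> of a domain admit a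
  nontrivial \<open>R\<close>-linear relation (fraction-free elimination of the last coordinate).\<close>

lemma subring_linear_dependence:
  fixes v :: "'j \<Rightarrow> nat \<Rightarrow> 'b::idom"
  assumes R: "is_subring R"
  shows "finite J \<Longrightarrow> n < card J \<Longrightarrow> (\<And>j i. j \<in> J \<Longrightarrow> n \<le> i \<Longrightarrow> v j i = 0) \<Longrightarrow>
    (\<And>j i. j \<in> J \<Longrightarrow> v j i \<in> R) \<Longrightarrow>
    \<exists>d. (\<forall>j\<in>J. d j \<in> R) \<and> (\<exists>j\<in>J. d j \<noteq> 0) \<and> (\<forall>i. (\<Sum>j\<in>J. d j * v j i) = 0)"
proof (induction n arbitrary: J v)
  case 0
  then obtain j where "j \<in> J" by fastforce
  thus ?case using 0 subring_1[OF R] by (intro exI[of _ "\<lambda>_. 1"]) auto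
next
  case (Suc n)
  show ?case
  proof (cases "\<forall>j\<in>J. v j n = 0")
    case True
    hence "v j i = 0" if "j \<in> J" "n \<le> i" for j i
      using that Suc.prems(3) by (cases "i = n") auto
    thus ?thesis using Suc.IH[of J v] Suc.prems by auto
  next
    case False
    then obtain j' where j': "j' \<in> J" "v j' n \<noteq> 0" by blast
    define J' where "J' = J - {j'}"
    have J: "J = insert j' J'" "j' \<notin> J'" "finite J'" using j' Suc.prems(1) by (auto simp: J'_def)
    txt \<open>Eliminate coordinate \<open>n\<close> using the vector \<open>v j'\<close> as pivot.\<close>
    define w where "w = (\<lambda>j i. v j' n * v j i - v j n * v j' i)"
    have "\<exists>d. (\<forall>j\<in>J'. d j \<in> R) \<and> (\<exists>j\<in>J'. d j \<noteq> 0) \<and> (\<forall>i. (\<Sum>j\<in>J'. d j * w j i) = 0)"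
    proof (rule Suc.IH)
      show "n < card J'" using Suc.prems(1,2) j' by (simp add: J'_def)
      show "w j i = 0" if "j \<in> J'" "n \<le> i" for j i
        using that Suc.prems(3) j' by (cases "i = n") (auto simp: w_def J'_def)
      show "w j i \<in> R" if "j \<in> J'" for j i
        using that Suc.prems(4) j' by (auto simp: w_def J'_def intro: subring_diff[OF R] subring_mult[OF R])
    qed (use J in auto)
    then obtain d where d: "\<forall>j\<in>J'. d j \<in> R" "\<exists>j\<in>J'. d j \<noteq> 0" "\<forall>i. (\<Sum>j\<in>J'. d j * w j i) = 0"
      by blast
    define d' where "d' = (\<lambda>j. if j = j' then - (\<Sum>j\<in>J'. d j * v j n) else d j * v j' n)"
    have "d' j \<in> R" if "j \<in> J" for j
      using that d(1) Suc.prems(4) J j'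
      by (auto simp: d'_def intro!: subring_uminus[OF R] subring_sum[OF R] subring_mult[OF R])
    moreover have "\<exists>j\<in>J. d' j \<noteq> 0"
      using d(2) j' J by (auto simp: d'_def)
    moreover have "(\<Sum>j\<in>J. d' j * v j i) = 0" for i
    proof -
      have "(\<Sum>j\<in>J. d' j * v j i) = d' j' * v j' i + (\<Sum>j\<in>J'. d j * v j' n * v j i)"
        using J by (auto simp: d'_def intro!: sum.cong)
      also have "\<dots> = (\<Sum>j\<in>J'. d j * w j i)"
        by (simp add: d'_def w_def sum_distrib_left sum_distrib_right algebra_simps sum_subtractf)
      finally show ?thesis using d(3) by simp
    qed
    ultimately show ?thesis by blast
  qed
qed

lemma power_reduction:
  fixes x lc :: "'b::comm_ring_1"
  assumes R: "is_subring R" and m: "m > 0" and lc: "lc \<in> R" and c: "\<And>i. c i \<in> R"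
    and rel: "lc * x ^ m = - (\<Sum>i<m. c i * x ^ i)"
  shows "\<exists>a. (\<forall>i. a i \<in> R) \<and> lc ^ N * x ^ N = (\<Sum>i<m. a i * x ^ i)"
proof (induction N)
  case 0
  have "(\<Sum>i<m. (if i = 0 then 1 else 0) * x ^ i) = (\<Sum>i<m. if i = 0 then 1 else 0)"
    by (intro sum.cong) auto
  also have "\<dots> = 1" using m by (simp add: sum.delta)
  finally have "(\<Sum>i<m. (if i = 0 then 1 else 0) * x ^ i) = 1" .
  thus ?case
    using subring_0[OF R] subring_1[OF R] by (intro exI[of _ "\<lambda>i. if i = 0 then 1 else 0"]) auto
next
  case (Suc N)
  then obtain a where a: "\<forall>i. a i \<in> R" "lc ^ N * x ^ N = (\<Sum>i<m. a i * x ^ i)" by blast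
  obtain m' where m': "m = Suc m'" using m by (cases m) auto
  txt \<open>Multiply by \<open>lc * x\<close> and rewrite the top term \<open>lc * x ^ m\<close> using the relation.\<close>
  define b where "b = (\<lambda>i. (if i = 0 then 0 else lc * a (i - 1)) - a m' * c i)"
  have "lc ^ Suc N * x ^ Suc N = (\<Sum>i<m'. lc * a i * x ^ Suc i) + a m' * (lc * x ^ m)"
    using a(2) by (simp add: m' sum_distrib_left algebra_simps)
  also have "(\<Sum>i<m'. lc * a i * x ^ Suc i) = (\<Sum>i<m. (if i = 0 then 0 else lc * a (i - 1)) * x ^ i)"
    unfolding m' sum.lessThan_Suc_shift by simp
  also have "a m' * (lc * x ^ m) = - (\<Sum>i<m. a m' * c i * x ^ i)"
    unfolding rel by (simp add: sum_distrib_left algebra_simps)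
  finally have "lc ^ Suc N * x ^ Suc N = (\<Sum>i<m. b i * x ^ i)"
    by (simp add: b_def algebra_simps sum_subtractf)
  moreover have "\<forall>i. b i \<in> R"
    using a(1) c lc subring_0[OF R] by (simp add: b_def subring_diff[OF R] subring_mult[OF R])
  ultimately show ?case by blast
qed

text \<open>If \<open>x\<close> is a root of a nonzero polynomial over \<open>R\<close>, any sequence of powers \<open>x ^ e j\<close>
  satisfies a nontrivial \<open>R\<close>-linear relation: the first \<open>degree q + 1\<close> of them span at most
  a rank-\<open>degree q\<close> module after scaling by powers of the leading coefficient.\<close>

lemma algebraic_powers_dependent:
  fixes x :: "'b::idom" and e :: "nat \<Rightarrow> nat"
  assumes R: "is_subring R" and q: "q \<noteq> 0" "\<And>i. coeff q i \<in> R" "poly q x = 0"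
  shows "\<exists>m D. (\<forall>j. D j \<in> R) \<and> (\<exists>j\<le>m. D j \<noteq> 0) \<and> (\<Sum>j\<le>m. D j * x ^ e j) = 0"
proof -
  define m where "m = degree q"
  define lc where "lc = coeff q m"
  have lc: "lc \<noteq> 0" "lc \<in> R" using q(1,2) by (simp_all add: lc_def m_def)
  have m: "m > 0"
  proof (rule ccontr)
    assume "\<not> m > 0"
    hence "poly q x = lc" by (simp add: poly_altdef lc_def m_def)
    thus False using q(3) lc by simp
  qed
  have "(\<Sum>i<Suc m. coeff q i * x ^ i) = 0"
    using q(3) by (simp add: poly_altdef m_def lessThan_Suc_atMost)
  hence rel: "lc * x ^ m = - (\<Sum>i<m. coeff q i * x ^ i)"
    by (simp add: lc_def eq_neg_iff_add_eq_0 add.commute)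
  have "\<forall>j. \<exists>a. (\<forall>i. a i \<in> R) \<and> lc ^ e j * x ^ e j = (\<Sum>i<m. a i * x ^ i)"
    using power_reduction[OF R m lc(2) q(2) rel] by blast
  then obtain A where A: "\<And>j i. A j i \<in> R" "\<And>j. lc ^ e j * x ^ e j = (\<Sum>i<m. A j i * x ^ i)"
    by metis
  define v where "v = (\<lambda>j i. if i < m then A j i else 0)"
  txt \<open>These are \<open>m + 1\<close> vectors of length \<open>m\<close>, hence linearly dependent.\<close>
  have "\<exists>d. (\<forall>j\<in>{..m}. d j \<in> R) \<and> (\<exists>j\<in>{..m}. d j \<noteq> 0) \<and>
      (\<forall>i. (\<Sum>j\<in>{..m}. d j * v j i) = 0)"
    by (rule subring_linear_dependence[OF R, of "{..m}" m v]) (auto simp: v_def A(1) subring_0[OF R])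
  then obtain d where d: "\<forall>j\<in>{..m}. d j \<in> R" "\<exists>j\<in>{..m}. d j \<noteq> 0"
    "\<forall>i. (\<Sum>j\<in>{..m}. d j * v j i) = 0"
    by blast
  define D where "D = (\<lambda>j. if j \<le> m then d j * lc ^ e j else 0)"
  have "D j \<in> R" for j
    using d(1) lc(2) by (auto simp: D_def intro: subring_mult[OF R] subring_power[OF R] subring_0[OF R])
  moreover have "\<exists>j\<le>m. D j \<noteq> 0" using d(2) lc(1) by (auto simp: D_def)
  moreover have "(\<Sum>j\<le>m. D j * x ^ e j) = 0"
  proof -
    have "(\<Sum>j\<le>m. D j * x ^ e j) = (\<Sum>j\<le>m. \<Sum>i<m. d j * v j i * x ^ i)"
      by (simp add: D_def mult.assoc A(2) sum_distrib_left v_def)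
    also have "\<dots> = (\<Sum>i<m. (\<Sum>j\<le>m. d j * v j i) * x ^ i)"
      by (subst sum.swap) (simp add: sum_distrib_right)
    finally show ?thesis using d(3) by simp
  qed
  ultimately show ?thesis by blast
qed

lemma additive_relation_normalize:
  fixes x :: "'b::comm_semiring_1"
  assumes rel: "(\<Sum>j\<le>m. D j * x ^ (p ^ j)) = 0" and nontrivial: "\<exists>j\<le>m. D j \<noteq> 0"
  shows "\<exists>j0 m'. D j0 \<noteq> 0 \<and> (\<Sum>j\<le>m'. D (j0 + j) * (x ^ (p ^ j0)) ^ (p ^ j)) = 0"
proof -
  define j0 where "j0 = (LEAST j. D j \<noteq> 0)"
  obtain j1 where j1: "j1 \<le> m" "D j1 \<noteq> 0" using nontrivial by blast
  have j0: "D j0 \<noteq> 0" "j0 \<le> m"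
    using LeastI[of "\<lambda>j. D j \<noteq> 0", OF j1(2)] Least_le[of "\<lambda>j. D j \<noteq> 0", OF j1(2)] j1(1)
    unfolding j0_def by simp_all
  have below: "D j = 0" if "j < j0" for j
    using not_less_Least[of j "\<lambda>j. D j \<noteq> 0"] that unfolding j0_def by blast
  have "(\<Sum>j\<le>m - j0. D (j0 + j) * (x ^ (p ^ j0)) ^ (p ^ j))
          = (\<Sum>j\<in>{0..m - j0}. D (j0 + j) * x ^ (p ^ (j0 + j)))"
    by (simp add: atMost_atLeast0 power_add power_mult)
  also have "\<dots> = (\<Sum>j\<in>{j0..m}. D j * x ^ (p ^ j))"
    using sum.atLeastAtMost_shift_0[OF j0(2), of "\<lambda>j. D j * x ^ (p ^ j)"] by (simp add: comp_def)
  also have "\<dots> = (\<Sum>j\<le>m. D j * x ^ (p ^ j))"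
    using below by (intro sum.mono_neutral_left) auto
  finally show ?thesis using j0(1) rel by (intro exI[of _ j0] exI[of _ "m - j0"]) simp
qed

lemma fls_solve_lowest_coeff:
  fixes g \<tau> :: "'a::field fls"
  assumes G: "is_subfield G" and g: "g \<noteq> 0" "\<And>i. g $$ i \<in> G"
    and prod: "(g * \<tau>) $$ (n + fls_subdegree g) \<in> G" and lower: "\<And>i. i < n \<Longrightarrow> \<tau> $$ i \<in> G"
  shows "\<tau> $$ n \<in> G"
proof (cases "n < fls_subdegree \<tau>")
  case True
  thus ?thesis using subring_0[OF subfield_subring[OF G]] by simp
next
  case False
  note R = subfield_subring[OF G]
  define w where "w = fls_subdegree g"
  define I where "I = {w..n + w - fls_subdegree \<tau>}"
  define rest where "rest = (\<Sum>i\<in>I - {w}. g $$ i * \<tau> $$ (n + w - i))"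
  have "(g * \<tau>) $$ (n + w) = g $$ w * \<tau> $$ n + rest"
    using False unfolding fls_times_nth(2) rest_def I_def w_def
    by (subst sum.remove[where x = "fls_subdegree g"]) auto
  moreover have "rest \<in> G"
    unfolding rest_def I_def using g(2) lower
    by (intro subring_sum[OF R] subring_mult[OF R]) auto
  ultimately have "g $$ w * \<tau> $$ n \<in> G"
    using subring_diff[OF R prod[folded w_def] \<open>rest \<in> G\<close>] by (simp add: algebra_simps)
  hence "inverse (g $$ w) * (g $$ w * \<tau> $$ n) \<in> G"
    using subring_mult[OF R subfield_inverse[OF G g(2)]] by blast
  moreover have "g $$ w \<noteq> 0" using g(1) by (simp add: w_def)
  ultimately show ?thesis by (simp add: field_simps)
qed

lemma fls_times_frobenius_nth_in:
  fixes D \<tau> :: "'a::field fls"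
  assumes G: "is_subfield G" and prime: "prime CHAR('a)" and Q: "Q = CHAR('a) ^ s"
    and D: "\<And>i. D $$ i \<in> G" and low: "\<And>i. int Q * i \<le> m - fls_subdegree D \<Longrightarrow> \<tau> $$ i \<in> G"
  shows "(D * \<tau> ^ Q) $$ m \<in> G"
proof (rule fls_times_nth_in[OF subfield_subring[OF G] D])
  fix l assume "D $$ l \<noteq> 0"
  hence l: "fls_subdegree D \<le> l" by (rule fls_subdegree_leI)
  show "(\<tau> ^ Q) $$ (m - l) \<in> G"
  proof (cases "int Q dvd (m - l)")
    case True
    hence "int Q * ((m - l) div int Q) \<le> m - fls_subdegree D" using l by simp
    thus ?thesis
      using True low subring_power[OF subfield_subring[OF G]] by (simp add: fls_frobenius_nth[OF prime Q])
  qed (simp add: fls_frobenius_nth[OF prime Q] subring_0[OF subfield_subring[OF G]])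
qed

text \<open>The coefficient recursion of an additive relation with \<open>D 0 \<noteq> 0\<close>: beyond a bound
  depending only on the subdegrees of the \<open>D j\<close>, the \<open>n\<close>-th coefficient of \<open>\<tau>\<close> is
  determined within \<open>G\<close> by the earlier ones, because \<open>\<tau> ^ p ^ j\<close> with \<open>j \<ge> 1\<close> only
  involves coefficients of index about \<open>n / p\<close>.\<close>

lemma additive_relation_coeff_step:
  fixes \<tau> :: "'a::field fls" and D :: "nat \<Rightarrow> 'a fls"
  assumes G: "is_subfield G" and prime: "prime CHAR('a)"
    and D: "\<And>j i. D j $$ i \<in> G" and D0: "D 0 \<noteq> 0"
    and rel: "(\<Sum>j\<le>m. D j * \<tau> ^ (CHAR('a) ^ j)) = 0"
    and n: "n > 0" "\<And>j. j \<in> {1..m} \<Longrightarrow> fls_subdegree (D 0) - fls_subdegree (D j) < n"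
    and lower: "\<And>i. i < n \<Longrightarrow> \<tau> $$ i \<in> G"
  shows "\<tau> $$ n \<in> G"
proof (rule fls_solve_lowest_coeff[OF G D0 D[of 0] _ lower])
  note R = subfield_subring[OF G]
  let ?w = "fls_subdegree (D 0)"
  have "D 0 * \<tau> = - (\<Sum>j\<in>{1..m}. D j * \<tau> ^ (CHAR('a) ^ j))"
    using rel by (simp add: atMost_atLeast0 sum.atLeast_Suc_atMost eq_neg_iff_add_eq_0)
  hence "(D 0 * \<tau>) $$ (n + ?w) = - (\<Sum>j\<in>{1..m}. (D j * \<tau> ^ (CHAR('a) ^ j)) $$ (n + ?w))"
    by (simp add: fls_nth_sum)
  also have "\<dots> \<in> G"
  proof (intro subring_uminus[OF R] subring_sum[OF R] fls_times_frobenius_nth_in[OF G prime refl D])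
    fix j i assume j: "j \<in> {1..m}" and i: "int (CHAR('a) ^ j) * i \<le> n + ?w - fls_subdegree (D j)"
    define Q where "Q = CHAR('a) ^ j"
    have "2 \<le> CHAR('a)" using prime by (simp add: prime_ge_2_nat)
    hence "2 \<le> Q" unfolding Q_def using j self_le_power[of "CHAR('a)" j] by simp
    hence "2 * n \<le> int Q * n" using n(1) by (intro mult_right_mono) simp_all
    moreover have "n + ?w - fls_subdegree (D j) < 2 * n" using n(2)[OF j] by simp
    ultimately have "int Q * i < int Q * n" using i unfolding Q_def by linarith
    hence "i < n" by (simp add: mult_less_cancel_left)
    thus "\<tau> $$ i \<in> G" by (rule lower)
  qed
  finally show "(D 0 * \<tau>) $$ (n + ?w) \<in> G" .
qed

lemma int_less_induct_from:
  fixes P :: "int \<Rightarrow> bool"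
  assumes below: "\<And>n. n < d \<Longrightarrow> P n" and step: "\<And>n. d \<le> n \<Longrightarrow> (\<And>i. i < n \<Longrightarrow> P i) \<Longrightarrow> P n"
  shows "P n"
proof (induction "nat (n - d)" arbitrary: n rule: less_induct)
  case less
  show ?case
  proof (cases "n < d")
    case False
    show ?thesis
    proof (rule step)
      fix i assume "i < n"
      thus "P i" using less[of i] below[of i] by (cases "i < d") auto
    qed (use False in simp)
  qed (rule below)
qed

text \<open>If \<open>\<tau>\<close> satisfies an additive relation over \<open>k((x))\<close> with \<open>D 0 \<noteq> 0\<close> and each
  coefficient has some \<open>p\<close>-power in \<open>k\<close>, then one exponent works for all coefficients:
  it suffices for the finitely many coefficients up to the bound of the recursion.\<close>

lemma additive_relation_bounded_exponent:
  fixes k :: "'a::field set" and \<tau> :: "'a fls" and D :: "nat \<Rightarrow> 'a fls"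
  assumes k: "is_subfield k" and prime: "prime CHAR('a)"
    and coeffs: "\<And>n. \<exists>r. (\<tau> $$ n) ^ (CHAR('a) ^ r) \<in> k"
    and D: "\<And>j. D j \<in> laurent_over k" and D0: "D 0 \<noteq> 0"
    and rel: "(\<Sum>j\<le>m. D j * \<tau> ^ (CHAR('a) ^ j)) = 0"
  shows "\<exists>E. \<forall>n. \<tau> $$ n \<in> root_field k E"
proof -
  define B where "B = Max (insert 0 ((\<lambda>j. fls_subdegree (D 0) - fls_subdegree (D j)) ` {1..m}))"
  have B: "0 \<le> B" "\<And>j. j \<in> {1..m} \<Longrightarrow> fls_subdegree (D 0) - fls_subdegree (D j) \<le> B"
    unfolding B_def by (intro Max_ge; simp)+
  obtain r where r: "\<And>n. (\<tau> $$ n) ^ (CHAR('a) ^ r n) \<in> k" using coeffs by metis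
  define E where "E = Max (r ` {fls_subdegree \<tau>..B})"
  define G where "G = root_field k E"
  have G: "is_subfield G" "k \<subseteq> G"
    unfolding G_def by (simp_all add: root_field_subfield[OF k prime] subset_root_field[OF k])
  have "\<tau> $$ n \<in> G" for n
  proof (induction n rule: int_less_induct_from[where d = "fls_subdegree \<tau>"])
    case (1 n)
    thus ?case using subring_0[OF subfield_subring[OF G(1)]] by simp
  next
    case (2 n)
    show ?case
    proof (cases "n \<le> B")
      case True
      hence "r n \<le> E" using 2(1) unfolding E_def by (intro Max_ge) auto
      thus ?thesis unfolding G_def by (rule root_fieldI[OF k r])
    next
      case False
      show ?thesis
      proof (rule additive_relation_coeff_step[OF G(1) prime _ D0 rel])
        show "D j $$ i \<in> G" for j i using G(2) laurent_over_nth[OF D] by blast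
        show "0 < n" using False B(1) by simp
        show "fls_subdegree (D 0) - fls_subdegree (D j) < n" if "j \<in> {1..m}" for j
          using B(2)[OF that] False by simp
        show "\<tau> $$ i \<in> G" if "i < n" for i using 2(2)[OF that] .
      qed
    qed
  qed
  thus ?thesis unfolding G_def by blast
qed

lemma algebraic_bounded_exponent:
  fixes k :: "'a::field set" and \<sigma> :: "'a fls"
  assumes k: "is_subfield k" and prime: "prime CHAR('a)"
    and coeffs: "\<And>i. \<exists>r. (\<sigma> $$ i) ^ (CHAR('a) ^ r) \<in> k"
    and alg: "algebraic_over (laurent_over k) \<sigma>"
  shows "\<exists>N. \<forall>i. \<sigma> $$ i \<in> root_field k N"
proof -
  let ?p = "CHAR('a)"
  obtain q where q: "q \<noteq> 0" "\<And>i. coeff q i \<in> laurent_over k" "poly q \<sigma> = 0"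
    using alg unfolding algebraic_over_def by blast
  obtain m D where D: "\<forall>j. D j \<in> laurent_over k" "\<exists>j\<le>m. D j \<noteq> 0"
    "(\<Sum>j\<le>m. D j * \<sigma> ^ (?p ^ j)) = 0"
    using algebraic_powers_dependent[OF laurent_over_subring[OF k] q, of "\<lambda>j. ?p ^ j"] by blast
  then obtain j0 m' where rel: "D j0 \<noteq> 0" "(\<Sum>j\<le>m'. D (j0 + j) * (\<sigma> ^ (?p ^ j0)) ^ (?p ^ j)) = 0"
    using additive_relation_normalize[OF D(3,2)] by blast
  define P where "P = ?p ^ j0"
  have frob: "(\<sigma> ^ P) $$ n = (if int P dvd n then (\<sigma> $$ (n div int P)) ^ P else 0)" for n
    by (rule fls_frobenius_nth[OF prime]) (simp add: P_def)
  have coeffs_P: "\<exists>r. ((\<sigma> ^ P) $$ n) ^ (?p ^ r) \<in> k" for n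
  proof (cases "int P dvd n")
    case True
    obtain r where "(\<sigma> $$ (n div int P)) ^ (?p ^ r) \<in> k" using coeffs by blast
    hence "((\<sigma> $$ (n div int P)) ^ (?p ^ r)) ^ P \<in> k"
      by (rule subring_power[OF subfield_subring[OF k]])
    moreover have "((\<sigma> $$ (n div int P)) ^ P) ^ (?p ^ r) = ((\<sigma> $$ (n div int P)) ^ (?p ^ r)) ^ P"
      by (simp flip: power_mult add: mult.commute)
    ultimately show ?thesis using True frob[of n] by (intro exI[of _ r]) simp
  next
    case False
    thus ?thesis using frob[of n] subring_0[OF subfield_subring[OF k]] prime
      by (intro exI[of _ 0]) (simp add: prime_gt_0_nat)
  qed
  have "D (j0 + j) \<in> laurent_over k" for j using D(1) by blast
  then obtain E where E: "\<forall>n. (\<sigma> ^ P) $$ n \<in> root_field k E"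
    using additive_relation_bounded_exponent[OF k prime coeffs_P _ _ rel(2)[folded P_def]] rel(1)
    by auto
  have "\<sigma> $$ i \<in> root_field k (j0 + E)" for i
  proof -
    have "(\<sigma> ^ P) $$ (int P * i) = (\<sigma> $$ i) ^ P"
      using frob[of "int P * i"] prime by (simp add: P_def prime_gt_0_nat)
    hence "((\<sigma> $$ i) ^ P) ^ (?p ^ E) \<in> k" using E by (metis mem_Collect_eq root_field_def)
    thus ?thesis unfolding root_field_def P_def by (simp add: power_add power_mult)
  qed
  thus ?thesis by blast
qed

lemma root_field_coeffs_algebraic:
  fixes k :: "'a::field set" and \<sigma> :: "'a fls"
  assumes k: "is_subfield k" and prime: "prime CHAR('a)"
    and coeffs: "\<And>i. \<sigma> $$ i \<in> root_field k N"
  shows "algebraic_over (laurent_over k) \<sigma>"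
proof -
  define Q where "Q = CHAR('a) ^ N"
  have Q_pos: "Q > 0" using prime by (simp add: Q_def prime_gt_0_nat)
  have "(\<sigma> ^ Q) $$ i \<in> k" for i
    using fls_frobenius_nth[OF prime Q_def, of \<sigma> i] coeffs subring_0[OF subfield_subring[OF k]]
    by (simp add: root_field_def Q_def)
  hence "\<sigma> ^ Q \<in> laurent_over k" by (simp add: laurent_over_def)
  define q where "q = monom 1 Q - [:\<sigma> ^ Q:]"
  have coeff_q: "coeff q i = (if i = Q then 1 else 0) - (if i = 0 then \<sigma> ^ Q else 0)" for i
    by (cases i) (auto simp: q_def coeff_monom)
  have "q \<noteq> 0" using coeff_q[of Q] Q_pos by auto
  moreover have "coeff q i \<in> laurent_over k" for i
    using \<open>\<sigma> ^ Q \<in> laurent_over k\<close> laurent_over_subring[OF k]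
    by (auto simp: coeff_q intro: subring_0 subring_1 subring_diff subring_uminus)
  moreover have "poly q \<sigma> = 0" by (simp add: q_def poly_monom)
  ultimately show ?thesis unfolding algebraic_over_def by blast
qed

theorem theorem2p4:
  fixes k :: "'a::field set" and \<sigma> :: "'a fls" and p :: nat
  assumes "is_alg_closure_of k"
    and "p = CHAR('a)" and "p > 0"
    and "purely_inseparable p k (gen_field k {fls_nth \<sigma> i | i. True})"
  shows "algebraic_over (laurent_over k) \<sigma> \<longleftrightarrow>
         (\<exists>n::nat. \<forall>a \<in> gen_field k {fls_nth \<sigma> i | i. True}. a ^ (p ^ n) \<in> k)"
proof -
  let ?L = "gen_field k {fls_nth \<sigma> i | i. True}"
  have k: "is_subfield k" using assms(1) by (simp add: is_alg_closure_of_def)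
  have prime: "prime CHAR('a)" using assms(2,3) prime_CHAR_semidom by blast
  have coeffs_L: "\<sigma> $$ i \<in> ?L" for i
    using gen_field_generators[of "{fls_nth \<sigma> i | i. True}" k] by blast
  have L_root_field: "?L \<subseteq> root_field k n \<longleftrightarrow> (\<forall>a\<in>?L. a ^ (p ^ n) \<in> k)" for n
    unfolding root_field_def assms(2) by blast
  show ?thesis
  proof
    assume "algebraic_over (laurent_over k) \<sigma>"
    moreover have "\<exists>r. (\<sigma> $$ i) ^ (CHAR('a) ^ r) \<in> k" for i
      using assms(4) coeffs_L[of i] unfolding purely_inseparable_def assms(2) by blast
    ultimately obtain N where "\<forall>i. \<sigma> $$ i \<in> root_field k N"
      using algebraic_bounded_exponent[OF k prime] by blast
    hence "?L \<subseteq> root_field k N"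
      by (intro gen_field_least root_field_subfield[OF k prime] subset_root_field[OF k]) auto
    thus "\<exists>n. \<forall>a\<in>?L. a ^ (p ^ n) \<in> k" using L_root_field by blast
  next
    assume "\<exists>n. \<forall>a\<in>?L. a ^ (p ^ n) \<in> k"
    then obtain n where "?L \<subseteq> root_field k n" using L_root_field by blast
    hence "\<sigma> $$ i \<in> root_field k n" for i using coeffs_L by blast
    thus "algebraic_over (laurent_over k) \<sigma>" by (rule root_field_coeffs_algebraic[OF k prime])
  qed
qed

end
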